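(* Under the standing setup and the algorithm/assumptions described in the context, let $m:\mathbb{N}\to\mathbb{N}$ be strictly increasing with $\lim_{l\to\infty}\mathcal{M}_{\bar\gamma}^{F_{m(l)},\phi}(x_{m(l)})=0$. Then every cluster point $x^\star$ of $(x_{m(l)})_{l=1}^\infty$ is a stationary point of $F+\phi=h+g\circ\mathfrak{S}+\phi$, i.e. $0\in\partial_F(F+\phi)(x^\star)$.
   Context: Standing setup: $\mathcal{X},\mathcal{Z}$ finite-dimensional real Hilbert spaces; $\phi:\mathcal{X}\to\mathbb{R}\cup\{+\infty\}$ proper lower semicontinuous convex; $h:\mathcal{X}\to\mathbb{R}$ differentiable with $\nabla h$ Lipschitz on $\mathrm{dom}\,\phi$; $\mathfrak{S}:\mathcal{X}\to\mathcal{Z}$ continuously differentiable; $g:\mathcal{Z}\to\mathbb{R}$ Lipschitz with constant $L_g>0$ and $\eta$-weakly convex ($g+\frac\eta2\|\cdot\|^2$ convex, $\eta>0$); $F:=h+g\circ\mathfrak{S}$ and $\mathrm{argmin}_x(F+\phi)\ne\emptyset$. Fréchet subdifferential: for proper $J$ and $\bar x\in\mathrm{dom}\,J$, $\partial_FJ(\bar x)=\{v:\liminf_{x\to\bar x,x\neq\bar x}\frac{J(x)-J(\bar x)-\langle v,x-\bar x\rangle}{\|x-\bar x\|}\ge0\}$, and $\emptyset$ otherwise. Notation: $\mathrm{prox}_{\gamma\phi}(\bar x)=\mathrm{argmin}_x(\phi(x)+\frac1{2\gamma}\|x-\bar x\|^2)$; ${}^{\mu}g(\bar z)=\min_z(g(z)+\frac1{2\mu}\|z-\bar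 z\|^2)$ for $\mu\in(0,\eta^{-1})$. $F_n:=h+{}^{\mu_n}g\circ\mathfrak{S}$; $\mathcal{M}_\gamma^{F_n,\phi}(x)=\|(x-\mathrm{prox}_{\gamma\phi}(x-\gamma\nabla F_n(x)))/\gamma\|$. Algorithm and assumptions: fix $x_1\in\mathrm{dom}\,\phi$, $c\in(0,1)$. (a) $(\mu_n)\subset(0,\frac1{2\eta}]$, $\mu_n\to0$, $\sum\mu_n=+\infty$, $M^{-1}\le\mu_{n+1}/\mu_n\le1$ for some $M\ge1$. (b) $\nabla F_n$ Lipschitz on $\mathrm{dom}\,\phi$ with constant $L_{\nabla F_n}=\varpi_1+\varpi_2\mu_n^{-1}$, $\varpi_1\ge0$, $\varpi_2>0$. (c) $\gamma_n>0$ with $(F_n+\phi)(\mathrm{prox}_{\gamma_n\phi}(x_n-\gamma_n\nabla F_n(x_n)))\le(F_n+\phi)(x_n)-c\gamma_n(\mathcal{M}_{\gamma_n}^{F_n,\phi}(x_n))^2$ and $\beta L_{\nabla F_n}^{-1}\le\gamma_n\le\bar\gamma$ for fixed $\beta,\bar\gamma>0$. (d) $x_{n+1}=\mathrm{prox}_{\gamma_n\phi}(x_n-\gamma_n\nabla F_n(x_n))$. *)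

theory Defs
  imports "HOL-Analysis.Analysis"
begin

text \<open>Extended-real-valued functions \<open>\<phi> : X \<rightarrow> \<real> \<union> {+\<infinity>}\<close> are modelled with codomain ereal.\<close>

definition edom :: "('a \<Rightarrow> ereal) \<Rightarrow> 'a set" where
  "edom f = {x. f x < \<infinity>}"

definition proper_fun :: "('a \<Rightarrow> ereal) \<Rightarrow> bool" where
  "proper_fun f \<longleftrightarrow> (\<forall>x. f x \<noteq> -\<infinity>) \<and> (\<exists>x. f x < \<infinity>)"

definition lsc_fun :: "('a::topological_space \<Rightarrow> ereal) \<Rightarrow> bool" where
  "lsc_fun f \<longleftrightarrow> (\<forall>x. f x \<le> Liminf (at x) f)"

definition econvex_fun :: "('a::real_vector \<Rightarrow> ereal) \<Rightarrow> bool" where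
  "econvex_fun f \<longleftrightarrow> (\<forall>x y t. 0 \<le> t \<longrightarrow> t \<le> 1 \<longrightarrow>
      f ((1 - t) *\<^sub>R x + t *\<^sub>R y) \<le> ereal (1 - t) * f x + ereal t * f y)"

definition gradient :: "('a::real_inner \<Rightarrow> real) \<Rightarrow> 'a \<Rightarrow> 'a" where
  "gradient f x = (THE v. (f has_derivative (\<lambda>u. v \<bullet> u)) (at x))"

definition prox :: "real \<Rightarrow> ('a::real_normed_vector \<Rightarrow> ereal) \<Rightarrow> 'a \<Rightarrow> 'a" where
  "prox \<gamma> \<phi> xb = (THE x. \<forall>y. \<phi> x + ereal ((norm (x - xb))\<^sup>2 / (2 * \<gamma>))
                               \<le> \<phi> y + ereal ((norm (y - xb))\<^sup>2 / (2 * \<gamma>)))"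

definition moreau_env :: "real \<Rightarrow> ('b::real_normed_vector \<Rightarrow> real) \<Rightarrow> 'b \<Rightarrow> real" where
  "moreau_env \<mu> g zb = (INF z. g z + (norm (z - zb))\<^sup>2 / (2 * \<mu>))"

definition residual :: "real \<Rightarrow> ('a::real_inner \<Rightarrow> real) \<Rightarrow> ('a \<Rightarrow> ereal) \<Rightarrow> 'a \<Rightarrow> real" where
  "residual \<gamma> F \<phi> x = norm ((1 / \<gamma>) *\<^sub>R (x - prox \<gamma> \<phi> (x - \<gamma> *\<^sub>R gradient F x)))"

definition frechet_subdiff :: "('a::real_inner \<Rightarrow> ereal) \<Rightarrow> 'a \<Rightarrow> 'a set" where
  "frechet_subdiff J xb =
     (if \<bar>J xb\<bar> = \<infinity> then {}
      else {v. 0 \<le> Liminf (at xb)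
                 (\<lambda>x. (J x - J xb - ereal (v \<bullet> (x - xb))) / ereal (norm (x - xb)))})"

definition cluster_point :: "(nat \<Rightarrow> 'a::topological_space) \<Rightarrow> 'a \<Rightarrow> bool" where
  "cluster_point s a \<longleftrightarrow> (\<exists>r. strict_mono r \<and> (s \<circ> r) \<longlonglongrightarrow> a)"

end

(*
  Let p_k be the proximal gradient point computed from x_k with step \<gamma>bar and smoothing \<mu>_k.
  Its optimality condition reads
    \<phi> y \<ge> \<phi> p_k + <(x_k - p_k)/\<gamma>bar - \<nabla>h x_k - DS(x_k)\<^sup>T v_k, y - p_k>,
  where v_k, the gradient of the Moreau envelope at S x_k, is a weak subgradient of g at the
  Moreau proximal point z_k = S x_k - \<mu>_k v_k and is bounded by 2 Lg.  Along a subsequence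
  v_k \<rightarrow> v; the residual (x_k - p_k)/\<gamma>bar tends to 0, so p_k has the same limit x' as x_k,
  and z_k \<rightarrow> S x' because \<mu>_k \<rightarrow> 0.  Lower semicontinuity of \<phi> and continuity of g turn the
  two inequalities into
    \<phi> y \<ge> \<phi> x' - <\<nabla>h x' + DS(x')\<^sup>T v, y - x'>,
    g z \<ge> g (S x') + <v, z - S x'> - \<eta>/2 |z - S x'|\<^sup>2,
  and adding them with first-order expansions of h and S at x' gives
  (F + \<phi>) y \<ge> (F + \<phi>) x' + o(|y - x'|), i.e. 0 is a Frechet subgradient at x'.
*)

theory Submission
  imports Defs "HOL-Real_Asymp.Real_Asymp"
begin

lemma le_of_forall_pos_le_diff_mult:
  fixes a b c :: real
  assumes "\<And>t. 0 < t \<Longrightarrow> t \<le> 1 \<Longrightarrow> b - t * c \<le> a"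
  shows "b \<le> a"
proof (rule tendsto_upperbound)
  show "((\<lambda>t. b - t * c) \<longlongrightarrow> b) (at_right 0)"
    by (auto intro!: tendsto_eq_intros)
  show "\<forall>\<^sub>F t in at_right 0. b - t * c \<le> a"
    unfolding eventually_at_right_field using assms by (intro exI[of _ 1]) auto
qed simp

lemma power2_norm_convex_combination:
  fixes a b :: "'a::real_inner"
  shows "(norm ((1 - t) *\<^sub>R a + t *\<^sub>R b))\<^sup>2
       = (1 - t) * (norm a)\<^sup>2 + t * (norm b)\<^sup>2 - t * (1 - t) * (norm (a - b))\<^sup>2"
  unfolding power2_norm_eq_inner
  by (simp add: inner_commute algebra_simps)

lemma weakly_convex_onD:
  fixes g :: "'a::real_inner \<Rightarrow> real"
  assumes "convex_on UNIV (\<lambda>z. g z + \<eta> / 2 * (norm z)\<^sup>2)" and "0 \<le> t" "t \<le> 1"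
  shows "g ((1 - t) *\<^sub>R a + t *\<^sub>R b) \<le> (1 - t) * g a + t * g b + \<eta> / 2 * (t * (1 - t) * (norm (a - b))\<^sup>2)"
  using convex_onD[OF assms(1), of t a b] assms(2,3)
  unfolding power2_norm_convex_combination by (simp add: field_simps)

text \<open>The hypothesis is what minimality of \<open>p\<close> for \<open>\<lambda>z. f z + (norm (z - w))\<^sup>2 / (2 * \<gamma>)\<close>
  and \<open>\<eta>\<close>-weak convexity of \<open>f\<close> on the segment from \<open>p\<close> to \<open>y\<close> give, with \<open>P = f p\<close> and \<open>Y = f y\<close>;
  dividing by \<open>t\<close> and letting \<open>t \<rightarrow> 0\<close> yields a weak subgradient inequality.\<close>

lemma subgradient_ineq_of_segment_min:
  fixes p y w :: "'a::real_inner"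
  assumes "\<gamma> > 0"
    and min: "\<And>t. 0 < t \<Longrightarrow> t \<le> 1 \<Longrightarrow> P + (norm (p - w))\<^sup>2 / (2 * \<gamma>)
      \<le> (1 - t) * P + t * Y + \<eta> / 2 * (t * (1 - t) * (norm (p - y))\<^sup>2)
         + (norm ((1 - t) *\<^sub>R p + t *\<^sub>R y - w))\<^sup>2 / (2 * \<gamma>)"
  shows "P + ((1 / \<gamma>) *\<^sub>R (w - p)) \<bullet> (y - p) - \<eta> / 2 * (norm (y - p))\<^sup>2 \<le> Y"
proof -
  define a where "a = (w - p) \<bullet> (y - p)"
  define n where "n = (norm (y - p))\<^sup>2"
  define N where "N = (norm (p - w))\<^sup>2"
  have "P + a / \<gamma> - \<eta> / 2 * n - t * (n / (2 * \<gamma>) - \<eta> / 2 * n) \<le> Y"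
    if t: "0 < t" "t \<le> 1" for t
  proof -
    define E where "E = (norm ((1 - t) *\<^sub>R p + t *\<^sub>R y - w))\<^sup>2"
    have "(1 - t) *\<^sub>R p + t *\<^sub>R y - w = (p - w) + t *\<^sub>R (y - p)"
      by (simp add: algebra_simps)
    then have "E = N - 2 * t * a + t\<^sup>2 * n"
      unfolding E_def N_def a_def n_def power2_norm_eq_inner
      by (simp add: inner_commute algebra_simps power2_eq_square)
    then have "E / (2 * \<gamma>) = N / (2 * \<gamma>) - t * (a / \<gamma>) + t * (t * (n / (2 * \<gamma>)))"
      using \<open>\<gamma> > 0\<close> by (simp add: field_simps power2_eq_square)
    moreover have "P + N / (2 * \<gamma>) \<le> (1 - t) * P + t * Y + \<eta> / 2 * (t * (1 - t) * n) + E / (2 * \<gamma>)"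
      using min[OF t] by (simp add: E_def N_def n_def norm_minus_commute)
    ultimately have "t * P \<le> t * Y + \<eta> / 2 * (t * (1 - t) * n) - t * (a / \<gamma>) + t * (t * (n / (2 * \<gamma>)))"
      by (simp add: left_diff_distrib)
    then have "t * (P + a / \<gamma> - \<eta> / 2 * n - t * (n / (2 * \<gamma>) - \<eta> / 2 * n)) \<le> t * Y"
      by (simp add: algebra_simps)
    then show ?thesis using t by simp
  qed
  then have "P + a / \<gamma> - \<eta> / 2 * n \<le> Y" by (rule le_of_forall_pos_le_diff_mult)
  then show ?thesis by (simp add: a_def n_def)
qed

text \<open>Adding the subgradient inequalities of two such minimizers gives strong monotonicity;
  for \<open>\<eta> = 0\<close> and \<open>w = w'\<close> this is the uniqueness of proximal points.\<close>

lemma norm_diff_le_of_subgradient_ineqs: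
  fixes p q w w' :: "'a::real_inner"
  assumes "\<mu> > 0" "\<mu> * \<eta> \<le> 1 / 2"
    and p: "P + ((1 / \<mu>) *\<^sub>R (w - p)) \<bullet> (q - p) - \<eta> / 2 * (norm (q - p))\<^sup>2 \<le> Q"
    and q: "Q + ((1 / \<mu>) *\<^sub>R (w' - q)) \<bullet> (p - q) - \<eta> / 2 * (norm (p - q))\<^sup>2 \<le> P"
  shows "norm (p - q) \<le> 2 * norm (w - w')"
proof -
  have "((1 / \<mu>) *\<^sub>R (w - p)) \<bullet> (q - p) + ((1 / \<mu>) *\<^sub>R (w' - q)) \<bullet> (p - q)
      = ((w - w') \<bullet> (q - p) + (norm (p - q))\<^sup>2) / \<mu>"
    by (simp add: power2_norm_eq_inner inner_commute algebra_simps add_divide_distrib diff_divide_distrib)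
  with p q have "((w - w') \<bullet> (q - p) + (norm (p - q))\<^sup>2) / \<mu> \<le> \<eta> * (norm (p - q))\<^sup>2"
    by (simp add: norm_minus_commute)
  then have "(norm (p - q))\<^sup>2 - \<mu> * \<eta> * (norm (p - q))\<^sup>2 \<le> (w' - w) \<bullet> (q - p)"
    using \<open>\<mu> > 0\<close> by (simp add: field_simps inner_diff_left)
  also have "\<dots> \<le> norm (w - w') * norm (p - q)"
    by (metis norm_cauchy_schwarz norm_minus_commute)
  finally have "norm (p - q) * norm (p - q) \<le> (2 * norm (w - w')) * norm (p - q)"
    using mult_right_mono[OF \<open>\<mu> * \<eta> \<le> 1 / 2\<close>, of "(norm (p - q))\<^sup>2"]
    by (simp add: power2_eq_square algebra_simps)
  then show ?thesis
    by (cases "norm (p - q) = 0") (auto simp: mult_le_cancel_right)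
qed

lemma gradient_eqI:
  fixes f :: "'a::euclidean_space \<Rightarrow> real"
  assumes "(f has_derivative (\<lambda>u. v \<bullet> u)) (at x)"
  shows "gradient f x = v"
  unfolding gradient_def
proof (rule the_equality)
  show "(f has_derivative (\<lambda>u. v \<bullet> u)) (at x)" by (fact assms)
next
  fix v' assume "(f has_derivative (\<lambda>u. v' \<bullet> u)) (at x)"
  then have "(\<lambda>u. v' \<bullet> u) = (\<lambda>u. v \<bullet> u)" using has_derivative_unique assms by blast
  then show "v' = v" by (metis vector_eq_ldot inner_commute)
qed

lemma has_derivative_gradient:
  fixes f :: "'a::euclidean_space \<Rightarrow> real"
  assumes "f differentiable (at x)"
  shows "(f has_derivative (\<lambda>u. gradient f x \<bullet> u)) (at x)"
proof -
  obtain D where D: "(f has_derivative D) (at x)" using assms unfolding differentiable_def by blast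
  have "D = (\<lambda>u. adjoint D 1 \<bullet> u)"
    using adjoint_works[OF has_derivative_linear[OF D], of _ 1] by (auto simp: inner_commute)
  with D have "(f has_derivative (\<lambda>u. adjoint D 1 \<bullet> u)) (at x)" by simp
  then show ?thesis using gradient_eqI by metis
qed

section \<open>Moreau envelope of a Lipschitz weakly convex function\<close>

text \<open>\<open>SOME\<close> picks an arbitrary minimizer; for weakly convex \<open>g\<close> and \<open>\<mu> * \<eta> < 1\<close> it is
  unique, but only its existence for Lipschitz \<open>g\<close> is used below.\<close>

definition moreau_prox :: "real \<Rightarrow> ('z::real_normed_vector \<Rightarrow> real) \<Rightarrow> 'z \<Rightarrow> 'z" where
  "moreau_prox \<mu> g w =
     (SOME z. \<forall>z'. g z + (norm (z - w))\<^sup>2 / (2 * \<mu>) \<le> g z' + (norm (z' - w))\<^sup>2 / (2 * \<mu>))"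

definition moreau_grad :: "real \<Rightarrow> ('z::real_normed_vector \<Rightarrow> real) \<Rightarrow> 'z \<Rightarrow> 'z" where
  "moreau_grad \<mu> g w = (1 / \<mu>) *\<^sub>R (w - moreau_prox \<mu> g w)"

lemma moreau_minimizer_exists:
  fixes g :: "'z::euclidean_space \<Rightarrow> real"
  assumes lip: "lipschitz_on L UNIV g" and "L \<ge> 0" "\<mu> > 0"
  shows "\<exists>z. \<forall>z'. g z + (norm (z - w))\<^sup>2 / (2 * \<mu>) \<le> g z' + (norm (z' - w))\<^sup>2 / (2 * \<mu>)"
proof -
  let ?f = "\<lambda>z. g z + (norm (z - w))\<^sup>2 / (2 * \<mu>)"
  let ?K = "cball w (2 * \<mu> * L)"
  have "continuous_on ?K ?f"
    using \<open>\<mu> > 0\<close> by (intro continuous_intros continuous_on_subset[OF lipschitz_on_continuous_on[OF lip]]) auto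
  moreover have "w \<in> ?K" using assms by simp
  ultimately obtain z where "z \<in> ?K" and zmin: "\<And>y. y \<in> ?K \<Longrightarrow> ?f z \<le> ?f y"
    using continuous_attains_inf[OF compact_cball] by blast
  have "?f z \<le> ?f y" for y
  proof (cases "y \<in> ?K")
    case False
    then have far: "2 * \<mu> * L < norm (y - w)" by (simp add: dist_norm norm_minus_commute)
    have "g w - g y \<le> L * norm (y - w)"
      using lipschitz_onD[OF lip, of w y] by (simp add: dist_norm dist_real_def norm_minus_commute)
    also have "\<dots> \<le> (norm (y - w))\<^sup>2 / (2 * \<mu>)"
      using mult_right_mono[OF less_imp_le[OF far], of "norm (y - w)"] \<open>\<mu> > 0\<close>
      by (simp add: field_simps power2_eq_square)
    finally have "?f w \<le> ?f y" by simp
    then show ?thesis using zmin[OF \<open>w \<in> ?K\<close>] by linarith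
  qed (rule zmin)
  then show ?thesis by blast
qed

lemma moreau_prox_minimal:
  fixes g :: "'z::euclidean_space \<Rightarrow> real"
  assumes "lipschitz_on L UNIV g" "L \<ge> 0" "\<mu> > 0"
  shows "g (moreau_prox \<mu> g w) + (norm (moreau_prox \<mu> g w - w))\<^sup>2 / (2 * \<mu>)
      \<le> g z + (norm (z - w))\<^sup>2 / (2 * \<mu>)"
  using someI_ex[OF moreau_minimizer_exists[OF assms, of w]] unfolding moreau_prox_def by blast

lemma moreau_env_eq:
  fixes g :: "'z::euclidean_space \<Rightarrow> real"
  assumes "lipschitz_on L UNIV g" "L \<ge> 0" "\<mu> > 0"
  shows "moreau_env \<mu> g w = g (moreau_prox \<mu> g w) + (norm (moreau_prox \<mu> g w - w))\<^sup>2 / (2 * \<mu>)"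
proof -
  let ?f = "\<lambda>z. g z + (norm (z - w))\<^sup>2 / (2 * \<mu>)"
  have min: "?f (moreau_prox \<mu> g w) \<le> ?f z" for z
    by (rule moreau_prox_minimal[OF assms])
  have "bdd_below (range ?f)" by (rule bdd_belowI2[OF min])
  then have "(INF z. ?f z) \<le> ?f (moreau_prox \<mu> g w)" by (rule cINF_lower) simp
  moreover have "?f (moreau_prox \<mu> g w) \<le> (INF z. ?f z)" by (rule cINF_greatest) (auto intro: min)
  ultimately show ?thesis unfolding moreau_env_def by linarith
qed

lemma norm_moreau_grad_le:
  fixes g :: "'z::euclidean_space \<Rightarrow> real"
  assumes lip: "lipschitz_on L UNIV g" and "L \<ge> 0" "\<mu> > 0"
  shows "norm (moreau_grad \<mu> g w) \<le> 2 * L"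
proof -
  define z where "z = moreau_prox \<mu> g w"
  have "g z + (norm (z - w))\<^sup>2 / (2 * \<mu>) \<le> g w"
    using moreau_prox_minimal[OF assms, of w w] by (simp add: z_def)
  moreover have "g w - g z \<le> L * norm (z - w)"
    using lipschitz_onD[OF lip, of w z] by (simp add: dist_norm dist_real_def norm_minus_commute)
  ultimately have "(norm (z - w))\<^sup>2 / (2 * \<mu>) \<le> L * norm (z - w)" by linarith
  then have "norm (z - w) * norm (z - w) \<le> (2 * \<mu> * L) * norm (z - w)"
    using \<open>\<mu> > 0\<close> by (simp add: field_simps power2_eq_square)
  then have "norm (z - w) \<le> 2 * \<mu> * L"
    using assms by (cases "norm (z - w) = 0") (auto simp: mult_le_cancel_right)
  moreover have "norm (moreau_grad \<mu> g w) = norm (z - w) / \<mu>"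
    using \<open>\<mu> > 0\<close> unfolding moreau_grad_def z_def norm_scaleR by (simp add: norm_minus_commute)
  ultimately show ?thesis
    using \<open>\<mu> > 0\<close> by (simp add: divide_le_eq algebra_simps)
qed

lemma tendsto_moreau_prox:
  fixes g :: "'z::euclidean_space \<Rightarrow> real"
  assumes "lipschitz_on L UNIV g" "L \<ge> 0" "\<And>k. \<mu> k > 0" "\<mu> \<longlonglongrightarrow> 0" "w \<longlonglongrightarrow> w0"
  shows "(\<lambda>k. moreau_prox (\<mu> k) g (w k)) \<longlonglongrightarrow> w0"
proof -
  have "norm (\<mu> k *\<^sub>R moreau_grad (\<mu> k) g (w k)) \<le> 2 * L * \<mu> k" for k
    using mult_left_mono[OF norm_moreau_grad_le[OF assms(1,2) assms(3)[of k]], of "\<mu> k"] assms(3)[of k]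
    by (simp add: mult.commute)
  then have "\<forall>\<^sub>F k in sequentially. norm (\<mu> k *\<^sub>R moreau_grad (\<mu> k) g (w k)) \<le> 2 * L * \<mu> k"
    by (intro always_eventually allI)
  then have "(\<lambda>k. \<mu> k *\<^sub>R moreau_grad (\<mu> k) g (w k)) \<longlonglongrightarrow> 0"
    using tendsto_mult_right_zero[OF assms(4)] by (rule Lim_null_comparison)
  from tendsto_diff[OF assms(5) this]
  have "(\<lambda>k. w k - \<mu> k *\<^sub>R moreau_grad (\<mu> k) g (w k)) \<longlonglongrightarrow> w0" by simp
  moreover have "w k - \<mu> k *\<^sub>R moreau_grad (\<mu> k) g (w k) = moreau_prox (\<mu> k) g (w k)" for k
    using assms(3)[of k] by (simp add: moreau_grad_def)
  ultimately show ?thesis by simp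
qed

lemma moreau_prox_weak_subgradient:
  fixes g :: "'z::euclidean_space \<Rightarrow> real"
  assumes "lipschitz_on L UNIV g" "L \<ge> 0" "\<mu> > 0"
    and cvx: "convex_on UNIV (\<lambda>z. g z + \<eta> / 2 * (norm z)\<^sup>2)"
  shows "g (moreau_prox \<mu> g w) + moreau_grad \<mu> g w \<bullet> (z - moreau_prox \<mu> g w)
      - \<eta> / 2 * (norm (z - moreau_prox \<mu> g w))\<^sup>2 \<le> g z"
  unfolding moreau_grad_def
proof (rule subgradient_ineq_of_segment_min[OF \<open>\<mu> > 0\<close>])
  fix t :: real assume "0 < t" "t \<le> 1"
  let ?p = "moreau_prox \<mu> g w"
  show "g ?p + (norm (?p - w))\<^sup>2 / (2 * \<mu>)
      \<le> (1 - t) * g ?p + t * g z + \<eta> / 2 * (t * (1 - t) * (norm (?p - z))\<^sup>2)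
         + (norm ((1 - t) *\<^sub>R ?p + t *\<^sub>R z - w))\<^sup>2 / (2 * \<mu>)"
    using moreau_prox_minimal[OF assms(1-3), of w "(1 - t) *\<^sub>R ?p + t *\<^sub>R z"]
      weakly_convex_onD[OF cvx, of t ?p z] \<open>0 < t\<close> \<open>t \<le> 1\<close>
    by linarith
qed

lemma moreau_prox_lipschitz:
  fixes g :: "'z::euclidean_space \<Rightarrow> real"
  assumes "lipschitz_on L UNIV g" "L \<ge> 0" "\<mu> > 0" "\<mu> * \<eta> \<le> 1 / 2"
    and "convex_on UNIV (\<lambda>z. g z + \<eta> / 2 * (norm z)\<^sup>2)"
  shows "norm (moreau_prox \<mu> g w - moreau_prox \<mu> g w') \<le> 2 * norm (w - w')"
  by (rule norm_diff_le_of_subgradient_ineqs[OF assms(3,4)]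
      moreau_prox_weak_subgradient[OF assms(1-3,5), unfolded moreau_grad_def])+

lemma moreau_env_quadratic_remainder:
  fixes g :: "'z::euclidean_space \<Rightarrow> real"
  assumes "lipschitz_on L UNIV g" "L \<ge> 0" "\<mu> > 0" "\<mu> * \<eta> \<le> 1 / 2"
    and "convex_on UNIV (\<lambda>z. g z + \<eta> / 2 * (norm z)\<^sup>2)"
  shows "\<bar>moreau_env \<mu> g y - moreau_env \<mu> g w - moreau_grad \<mu> g w \<bullet> (y - w)\<bar>
      \<le> 2 / \<mu> * (norm (y - w))\<^sup>2"
proof -
  define z where "z = moreau_prox \<mu> g w"
  define z' where "z' = moreau_prox \<mu> g y"
  define d where "d = y - w"
  have shift: "(norm (u - y))\<^sup>2 / (2 * \<mu>)
      = (norm (u - w))\<^sup>2 / (2 * \<mu>) - ((u - w) \<bullet> d) / \<mu> + (norm d)\<^sup>2 / (2 * \<mu>)" for u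
  proof -
    have "(norm (u - y))\<^sup>2 = (norm (u - w))\<^sup>2 - 2 * ((u - w) \<bullet> d) + (norm d)\<^sup>2"
      unfolding d_def power2_norm_eq_inner by (simp add: inner_commute algebra_simps)
    then show ?thesis using \<open>\<mu> > 0\<close> by (simp add: field_simps)
  qed
  have env_w: "moreau_env \<mu> g w = g z + (norm (z - w))\<^sup>2 / (2 * \<mu>)"
    unfolding z_def by (rule moreau_env_eq[OF assms(1-3)])
  have env_y: "moreau_env \<mu> g y = g z' + (norm (z' - y))\<^sup>2 / (2 * \<mu>)"
    unfolding z'_def by (rule moreau_env_eq[OF assms(1-3)])
  have grad: "moreau_grad \<mu> g w \<bullet> d = - ((z - w) \<bullet> d) / \<mu>"
    by (simp add: moreau_grad_def z_def inner_diff_left)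
  have "moreau_env \<mu> g y \<le> g z + (norm (z - y))\<^sup>2 / (2 * \<mu>)"
    unfolding env_y z'_def by (rule moreau_prox_minimal[OF assms(1-3)])
  then have upper: "moreau_env \<mu> g y - moreau_env \<mu> g w - moreau_grad \<mu> g w \<bullet> d \<le> (norm d)\<^sup>2 / (2 * \<mu>)"
    unfolding shift env_w grad by simp
  have "moreau_env \<mu> g w \<le> g z' + (norm (z' - w))\<^sup>2 / (2 * \<mu>)"
    unfolding env_w z_def by (rule moreau_prox_minimal[OF assms(1-3)])
  then have lower: "moreau_env \<mu> g y - moreau_env \<mu> g w - moreau_grad \<mu> g w \<bullet> d
      \<ge> ((z - z') \<bullet> d) / \<mu> + (norm d)\<^sup>2 / (2 * \<mu>)"
    unfolding env_y shift grad by (simp add: diff_divide_distrib inner_diff_left)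
  have "- ((z - z') \<bullet> d) \<le> norm (z - z') * norm d"
    by (metis inner_minus_left norm_cauchy_schwarz norm_minus_cancel)
  also have "\<dots> \<le> 2 * (norm d)\<^sup>2"
    using mult_right_mono[OF moreau_prox_lipschitz[OF assms, of w y], of "norm d"]
    by (simp add: z_def z'_def d_def norm_minus_commute power2_eq_square)
  finally have cross: "- ((z - z') \<bullet> d) \<le> 2 * (norm d)\<^sup>2" .
  have "- ((z - z') \<bullet> d) / \<mu> \<le> 2 / \<mu> * (norm d)\<^sup>2"
    using divide_right_mono[OF cross, of \<mu>] \<open>\<mu> > 0\<close> by simp
  moreover have "0 \<le> (norm d)\<^sup>2 / (2 * \<mu>)" "(norm d)\<^sup>2 / (2 * \<mu>) \<le> 2 / \<mu> * (norm d)\<^sup>2"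
    using \<open>\<mu> > 0\<close> by (simp_all add: field_simps)
  ultimately show ?thesis
    using upper lower unfolding d_def abs_le_iff by linarith
qed

lemma moreau_env_has_derivative:
  fixes g :: "'z::euclidean_space \<Rightarrow> real"
  assumes "lipschitz_on L UNIV g" "L \<ge> 0" "\<mu> > 0" "\<mu> * \<eta> \<le> 1 / 2"
    and "convex_on UNIV (\<lambda>z. g z + \<eta> / 2 * (norm z)\<^sup>2)"
  shows "(moreau_env \<mu> g has_derivative (\<lambda>u. moreau_grad \<mu> g w \<bullet> u)) (at w)"
  unfolding has_derivative_iff_norm
proof (intro conjI bounded_linear_inner_right)
  let ?R = "\<lambda>y. moreau_env \<mu> g y - moreau_env \<mu> g w - moreau_grad \<mu> g w \<bullet> (y - w)"
  show "((\<lambda>y. norm (?R y) / norm (y - w)) \<longlongrightarrow> 0) (at w)"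
  proof (rule Lim_null_comparison)
    have "norm (norm (?R y) / norm (y - w)) \<le> 2 / \<mu> * norm (y - w)" for y
      using moreau_env_quadratic_remainder[OF assms, of y w]
      by (cases "y = w") (simp_all add: divide_le_eq power2_eq_square)
    then show "\<forall>\<^sub>F y in at w. norm (norm (?R y) / norm (y - w)) \<le> 2 / \<mu> * norm (y - w)"
      by (intro always_eventually allI)
    show "((\<lambda>y. 2 / \<mu> * norm (y - w)) \<longlongrightarrow> 0) (at w)"
      by (intro tendsto_eq_intros) auto
  qed
qed

lemma gradient_add_moreau_env_comp:
  fixes g :: "'z::euclidean_space \<Rightarrow> real" and h :: "'x::euclidean_space \<Rightarrow> real"
  assumes "lipschitz_on L UNIV g" "L \<ge> 0" "\<mu> > 0" "\<mu> * \<eta> \<le> 1 / 2"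
    and "convex_on UNIV (\<lambda>z. g z + \<eta> / 2 * (norm z)\<^sup>2)"
    and "h differentiable (at x)" and S: "(S has_derivative S') (at x)"
  shows "gradient (\<lambda>y. h y + moreau_env \<mu> g (S y)) x \<bullet> u
      = gradient h x \<bullet> u + moreau_grad \<mu> g (S x) \<bullet> S' u"
proof -
  define v where "v = moreau_grad \<mu> g (S x)"
  have lin: "linear S'" by (rule has_derivative_linear[OF S])
  have "((\<lambda>y. h y + moreau_env \<mu> g (S y)) has_derivative (\<lambda>u. gradient h x \<bullet> u + v \<bullet> S' u)) (at x)"
    unfolding v_def
    by (rule has_derivative_add[OF has_derivative_gradient[OF assms(6)]
          has_derivative_compose[OF S moreau_env_has_derivative[OF assms(1-5)]]])
  also have "(\<lambda>u. gradient h x \<bullet> u + v \<bullet> S' u) = (\<lambda>u. (gradient h x + adjoint S' v) \<bullet> u)"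
    by (rule ext) (simp add: inner_add_left inner_commute[of "adjoint S' v"] adjoint_works[OF lin] inner_commute[of v])
  finally have "gradient (\<lambda>y. h y + moreau_env \<mu> g (S y)) x = gradient h x + adjoint S' v"
    by (rule gradient_eqI)
  moreover have "adjoint S' v \<bullet> u = v \<bullet> S' u"
    using adjoint_works[OF lin, of u v] by (simp add: inner_commute)
  ultimately show ?thesis by (simp add: v_def inner_add_left)
qed

section \<open>Lower semicontinuous functions\<close>

lemma lsc_fun_le_liminf:
  assumes "lsc_fun f" and "s \<longlonglongrightarrow> x"
  shows "f x \<le> liminf (\<lambda>k. f (s k))"
  unfolding le_Liminf_iff
proof (intro allI impI)
  fix c assume "c < f x"
  moreover have "\<forall>\<^sub>F y in at x. c < f y"
    using \<open>lsc_fun f\<close> \<open>c < f x\<close> unfolding lsc_fun_def le_Liminf_iff by blast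
  ultimately have "\<forall>\<^sub>F y in nhds x. c < f y"
    unfolding eventually_at_filter by (auto elim: eventually_mono)
  then show "\<forall>\<^sub>F k in sequentially. c < f (s k)"
    using \<open>s \<longlonglongrightarrow> x\<close> by (rule eventually_compose_filterlim)
qed

lemma lsc_fun_add_continuous_le_liminf:
  fixes f :: "'a::metric_space \<Rightarrow> ereal"
  assumes "lsc_fun f" and "continuous_on UNIV q" and "s \<longlonglongrightarrow> x"
  shows "f x + ereal (q x) \<le> liminf (\<lambda>k. f (s k) + ereal (q (s k)))"
proof -
  have "isCont q x" using assms(2) by (simp add: continuous_on_eq_continuous_at)
  then have "(\<lambda>k. ereal (q (s k))) \<longlonglongrightarrow> ereal (q x)"
    by (intro tendsto_ereal isCont_tendsto_compose[OF _ assms(3)])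
  then have "liminf (\<lambda>k. ereal (q (s k)) + f (s k)) = ereal (q x) + liminf (\<lambda>k. f (s k))"
    by (rule ereal_liminf_lim_add) simp
  then show ?thesis
    using add_left_mono[OF lsc_fun_le_liminf[OF assms(1,3)], of "ereal (q x)"]
    by (simp add: add.commute)
qed

lemma seq_lsc_attains_inf:
  fixes f :: "'a::first_countable_topology \<Rightarrow> ereal"
  assumes lsc: "\<And>s x. s \<longlonglongrightarrow> x \<Longrightarrow> f x \<le> liminf (\<lambda>k. f (s k))"
    and "compact K" "K \<noteq> {}"
  shows "\<exists>p\<in>K. \<forall>y\<in>K. f p \<le> f y"
proof -
  obtain u where u: "\<And>n. u n \<in> f ` K" "u \<longlonglongrightarrow> Inf (f ` K)"
    using Inf_as_limit[of "f ` K"] \<open>K \<noteq> {}\<close> by blast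
  define ys where "ys n = inv_into K f (u n)" for n
  have ys: "ys n \<in> K" "f (ys n) = u n" for n
    unfolding ys_def using u(1) by (simp_all add: inv_into_into f_inv_into_f)
  obtain p r where p: "p \<in> K" "strict_mono r" "(ys \<circ> r) \<longlonglongrightarrow> p"
    using seq_compactE[OF compact_imp_seq_compact[OF \<open>compact K\<close>], of ys] ys(1) by blast
  have "f p \<le> liminf (\<lambda>k. u (r k))"
    using lsc[OF p(3)] by (simp add: ys(2) o_def)
  also have "\<dots> = Inf (f ` K)"
    using LIMSEQ_subseq_LIMSEQ[OF u(2) p(2)] by (simp add: lim_imp_Liminf o_def)
  finally have "f p \<le> f y" if "y \<in> K" for y
    using INF_lower[OF that, of f] by (rule order_trans)
  then show ?thesis using p(1) by blast
qed

lemma seq_lsc_attains_min: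
  fixes f :: "'a::first_countable_topology \<Rightarrow> ereal"
  assumes "\<And>s x. s \<longlonglongrightarrow> x \<Longrightarrow> f x \<le> liminf (\<lambda>k. f (s k))"
    and "compact K" "x0 \<in> K" and outside: "\<And>y. y \<notin> K \<Longrightarrow> f x0 \<le> f y"
  shows "\<exists>p. \<forall>y. f p \<le> f y"
proof -
  have "\<exists>p\<in>K. \<forall>y\<in>K. f p \<le> f y"
    by (rule seq_lsc_attains_inf[of f K]) (use assms in auto)
  then obtain p where min: "\<And>y. y \<in> K \<Longrightarrow> f p \<le> f y" by blast
  have "f p \<le> f y" for y
  proof (cases "y \<in> K")
    case False
    have "f p \<le> f x0" by (rule min[OF \<open>x0 \<in> K\<close>])
    also have "\<dots> \<le> f y" by (rule outside[OF False])
    finally show ?thesis .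
  qed (rule min)
  then show ?thesis by blast
qed

lemma lsc_fun_subgradient_ineq_limit:
  fixes \<phi> :: "'a::topological_space \<Rightarrow> ereal"
  assumes "lsc_fun \<phi>" "p \<longlonglongrightarrow> x" "a \<longlonglongrightarrow> a0" and ineq: "\<And>k. \<phi> (p k) + ereal (a k) \<le> c"
  shows "\<phi> x + ereal a0 \<le> c"
proof -
  have "(\<lambda>k. ereal (a k)) \<longlonglongrightarrow> ereal a0" using assms(3) by (rule tendsto_ereal)
  then have liminf_eq: "liminf (\<lambda>k. ereal (a k) + \<phi> (p k)) = ereal a0 + liminf (\<lambda>k. \<phi> (p k))"
    by (rule ereal_liminf_lim_add) simp
  have "ereal a0 + \<phi> x \<le> ereal a0 + liminf (\<lambda>k. \<phi> (p k))"
    by (rule add_left_mono[OF lsc_fun_le_liminf[OF assms(1,2)]])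
  also have "\<dots> = liminf (\<lambda>k. ereal (a k) + \<phi> (p k))" by (rule liminf_eq[symmetric])
  also have "\<dots> \<le> liminf (\<lambda>_. c)"
    using ineq by (intro Liminf_mono always_eventually allI) (simp add: add.commute)
  finally show ?thesis by (simp add: Liminf_const add.commute)
qed

section \<open>Proximal map of a proper lsc convex function\<close>

definition prox_minimizer :: "real \<Rightarrow> ('a::real_normed_vector \<Rightarrow> ereal) \<Rightarrow> 'a \<Rightarrow> 'a \<Rightarrow> bool" where
  "prox_minimizer \<gamma> \<phi> w p \<longleftrightarrow>
     (\<forall>y. \<phi> p + ereal ((norm (p - w))\<^sup>2 / (2 * \<gamma>)) \<le> \<phi> y + ereal ((norm (y - w))\<^sup>2 / (2 * \<gamma>)))"

text \<open>By lower semicontinuity \<open>\<phi>\<close> is bounded below on the unit ball around a point of its domain;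
  convexity propagates this bound outwards with linear decay.\<close>

lemma proper_convex_lsc_norm_minorant:
  fixes \<phi> :: "'a::euclidean_space \<Rightarrow> ereal"
  assumes proper: "proper_fun \<phi>" and lsc: "lsc_fun \<phi>" and cvx: "econvex_fun \<phi>"
  shows "\<exists>b K x0. K \<ge> 0 \<and> \<phi> x0 < \<infinity> \<and> (\<forall>y. ereal (b - K * norm (y - x0)) \<le> \<phi> y)"
proof -
  have ninf: "\<phi> y \<noteq> -\<infinity>" for y using proper unfolding proper_fun_def by blast
  obtain x0 where "\<phi> x0 < \<infinity>" using proper unfolding proper_fun_def by blast
  then obtain a where a: "\<phi> x0 = ereal a" using ninf[of x0] by (cases "\<phi> x0") auto
  have "\<exists>p\<in>cball x0 1. \<forall>y\<in>cball x0 1. \<phi> p \<le> \<phi> y"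
    by (rule seq_lsc_attains_inf) (auto intro: lsc_fun_le_liminf[OF lsc])
  then obtain p where "p \<in> cball x0 1" and pmin: "\<And>y. y \<in> cball x0 1 \<Longrightarrow> \<phi> p \<le> \<phi> y" by blast
  then have "\<phi> p \<le> ereal a" using a by (metis centre_in_cball zero_le_one)
  then obtain m where m: "\<And>y. norm (y - x0) \<le> 1 \<Longrightarrow> ereal m \<le> \<phi> y"
    using pmin ninf[of p] by (cases "\<phi> p") (auto simp: dist_norm norm_minus_commute)
  define b where "b = min m a"
  define K where "K = \<bar>m - a\<bar>"
  have "ereal (b - K * norm (y - x0)) \<le> \<phi> y" for y
  proof (cases "norm (y - x0) \<le> 1")
    case True
    have "0 \<le> K * norm (y - x0)" by (simp add: K_def)
    then have "b - K * norm (y - x0) \<le> m" by (simp add: b_def)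
    then show ?thesis using m[OF True] by (meson ereal_less_eq(3) order_trans)
  next
    case False
    define \<rho> where "\<rho> = norm (y - x0)"
    have "\<rho> > 1" using False by (simp add: \<rho>_def)
    define t where "t = 1 / \<rho>"
    have t: "0 \<le> t" "t \<le> 1" "\<rho> * t = 1" using \<open>\<rho> > 1\<close> by (auto simp: t_def)
    have "norm ((1 - t) *\<^sub>R x0 + t *\<^sub>R y - x0) = t * \<rho>"
      using t(1) by (simp add: \<rho>_def algebra_simps flip: scaleR_diff_right)
    then have "ereal m \<le> \<phi> ((1 - t) *\<^sub>R x0 + t *\<^sub>R y)" using t by (intro m) (simp add: mult.commute)
    also have "\<dots> \<le> ereal (1 - t) * \<phi> x0 + ereal t * \<phi> y"
      using cvx t unfolding econvex_fun_def by blast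
    finally have convex_bound: "ereal m \<le> ereal ((1 - t) * a) + ereal t * \<phi> y" by (simp add: a)
    show ?thesis
    proof (cases "\<phi> y")
      case (real q)
      then have "m \<le> (1 - t) * a + t * q" using convex_bound by simp
      then have "\<rho> * m \<le> \<rho> * ((1 - t) * a + t * q)"
        using \<open>\<rho> > 1\<close> by (simp add: mult_left_mono)
      also have "\<dots> = \<rho> * a - (\<rho> * t) * a + (\<rho> * t) * q" by (simp add: algebra_simps)
      finally have "\<rho> * m \<le> \<rho> * a - a + q" using t(3) by simp
      then have "a + \<rho> * (m - a) \<le> q" by (simp add: algebra_simps)
      moreover have "- (K * \<rho>) \<le> \<rho> * (m - a)"
        using mult_left_mono[of "- K" "m - a" \<rho>] \<open>\<rho> > 1\<close> by (simp add: K_def mult.commute)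
      ultimately show ?thesis using real by (simp add: \<rho>_def b_def)
    qed (use ninf in auto)
  qed
  moreover have "K \<ge> 0" by (simp add: K_def)
  ultimately show ?thesis using a by (intro exI[of _ b] exI[of _ K] exI[of _ x0]) auto
qed

lemma prox_minimizer_exists:
  fixes \<phi> :: "'a::euclidean_space \<Rightarrow> ereal"
  assumes proper: "proper_fun \<phi>" and lsc: "lsc_fun \<phi>" and cvx: "econvex_fun \<phi>" and "\<gamma> > 0"
  shows "\<exists>p. prox_minimizer \<gamma> \<phi> w p"
proof -
  define \<Phi> where "\<Phi> y = \<phi> y + ereal ((norm (y - w))\<^sup>2 / (2 * \<gamma>))" for y
  obtain b K x0 where minorant: "\<And>y. ereal (b - K * norm (y - x0)) \<le> \<phi> y" and "\<phi> x0 < \<infinity>"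
    using proper_convex_lsc_norm_minorant[OF proper lsc cvx] by blast
  then obtain a where a: "\<phi> x0 = ereal a"
    using proper unfolding proper_fun_def by (cases "\<phi> x0") auto
  define q where "q = norm (x0 - w)"
  have "\<forall>\<^sub>F \<rho> in at_top. a + q\<^sup>2 / (2 * \<gamma>) < b - K * \<rho> + (\<rho> - q)\<^sup>2 / (2 * \<gamma>)"
    using \<open>\<gamma> > 0\<close> by real_asymp
  then obtain R where R: "\<And>\<rho>. \<rho> \<ge> R \<Longrightarrow> a + q\<^sup>2 / (2 * \<gamma>) < b - K * \<rho> + (\<rho> - q)\<^sup>2 / (2 * \<gamma>)"
    unfolding eventually_at_top_linorder by blast
  have far: "\<Phi> x0 \<le> \<Phi> y" if "y \<notin> cball x0 (max R q)" for y
  proof -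
    define \<rho> where "\<rho> = norm (y - x0)"
    have "\<rho> \<ge> R" "\<rho> \<ge> q" using that by (auto simp: \<rho>_def dist_norm norm_minus_commute)
    have "\<rho> - q \<le> norm (y - w)"
      using norm_triangle_ineq[of "y - w" "w - x0"] by (simp add: \<rho>_def q_def norm_minus_commute)
    then have "(\<rho> - q)\<^sup>2 \<le> (norm (y - w))\<^sup>2" using \<open>\<rho> \<ge> q\<close> by (simp add: power_mono)
    then have "a + q\<^sup>2 / (2 * \<gamma>) \<le> b - K * \<rho> + (norm (y - w))\<^sup>2 / (2 * \<gamma>)"
      using R[OF \<open>\<rho> \<ge> R\<close>] \<open>\<gamma> > 0\<close> by (smt (verit) divide_right_mono)
    then have "\<Phi> x0 \<le> ereal (b - K * \<rho>) + ereal ((norm (y - w))\<^sup>2 / (2 * \<gamma>))"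
      by (simp add: \<Phi>_def a q_def)
    also have "\<dots> \<le> \<Phi> y" unfolding \<Phi>_def \<rho>_def by (intro add_right_mono minorant)
    finally show ?thesis .
  qed
  have "\<exists>p. \<forall>y. \<Phi> p \<le> \<Phi> y"
  proof (rule seq_lsc_attains_min[of \<Phi> "cball x0 (max R q)" x0])
    show "\<Phi> x \<le> liminf (\<lambda>k. \<Phi> (s k))" if "s \<longlonglongrightarrow> x" for s x
      unfolding \<Phi>_def using \<open>\<gamma> > 0\<close>
      by (intro lsc_fun_add_continuous_le_liminf[OF lsc _ that] continuous_intros) auto
  qed (use far in \<open>auto simp: q_def le_max_iff_disj\<close>)
  then show ?thesis unfolding prox_minimizer_def \<Phi>_def .
qed

lemma prox_minimizer_finite:
  assumes "proper_fun \<phi>" "prox_minimizer \<gamma> \<phi> w p"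
  shows "\<bar>\<phi> p\<bar> \<noteq> \<infinity>"
proof -
  obtain x0 where "\<phi> x0 < \<infinity>" using assms(1) unfolding proper_fun_def by blast
  moreover have "\<phi> p + ereal ((norm (p - w))\<^sup>2 / (2 * \<gamma>)) \<le> \<phi> x0 + ereal ((norm (x0 - w))\<^sup>2 / (2 * \<gamma>))"
    using assms(2) unfolding prox_minimizer_def by blast
  ultimately have "\<phi> p \<noteq> \<infinity>" by auto
  then show ?thesis using assms(1) unfolding proper_fun_def by auto
qed

lemma prox_minimizer_subgradient_ineq:
  fixes \<phi> :: "'a::real_inner \<Rightarrow> ereal"
  assumes "proper_fun \<phi>" "econvex_fun \<phi>" "\<gamma> > 0" and min: "prox_minimizer \<gamma> \<phi> w p"
  shows "\<phi> p + ereal (((1 / \<gamma>) *\<^sub>R (w - p)) \<bullet> (y - p)) \<le> \<phi> y"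
proof -
  obtain P where P: "\<phi> p = ereal P" using prox_minimizer_finite[OF assms(1) min] by auto
  show ?thesis
  proof (cases "\<phi> y")
    case (real Y)
    have "P + ((1 / \<gamma>) *\<^sub>R (w - p)) \<bullet> (y - p) - 0 / 2 * (norm (y - p))\<^sup>2 \<le> Y"
    proof (rule subgradient_ineq_of_segment_min[OF \<open>\<gamma> > 0\<close>])
      fix t :: real assume "0 < t" "t \<le> 1"
      let ?pt = "(1 - t) *\<^sub>R p + t *\<^sub>R y"
      have "\<phi> ?pt \<le> ereal (1 - t) * \<phi> p + ereal t * \<phi> y"
        using \<open>econvex_fun \<phi>\<close> \<open>0 < t\<close> \<open>t \<le> 1\<close> unfolding econvex_fun_def by simp
      then have convex: "\<phi> ?pt \<le> ereal ((1 - t) * P + t * Y)" by (simp add: P real)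
      have "ereal (P + (norm (p - w))\<^sup>2 / (2 * \<gamma>)) \<le> \<phi> ?pt + ereal ((norm (?pt - w))\<^sup>2 / (2 * \<gamma>))"
        using min unfolding prox_minimizer_def by (simp add: P)
      also have "\<dots> \<le> ereal ((1 - t) * P + t * Y) + ereal ((norm (?pt - w))\<^sup>2 / (2 * \<gamma>))"
        by (rule add_right_mono[OF convex])
      finally show "P + (norm (p - w))\<^sup>2 / (2 * \<gamma>)
          \<le> (1 - t) * P + t * Y + 0 / 2 * (t * (1 - t) * (norm (p - y))\<^sup>2)
             + (norm (?pt - w))\<^sup>2 / (2 * \<gamma>)"
        by simp
    qed
    then show ?thesis by (simp add: P real)
  qed (use assms(1) P in \<open>auto simp: proper_fun_def\<close>)
qed

lemma prox_minimizer_unique: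
  fixes \<phi> :: "'a::real_inner \<Rightarrow> ereal"
  assumes "proper_fun \<phi>" "econvex_fun \<phi>" "\<gamma> > 0"
    and "prox_minimizer \<gamma> \<phi> w p" "prox_minimizer \<gamma> \<phi> w q"
  shows "p = q"
proof -
  obtain P Q where P: "\<phi> p = ereal P" and Q: "\<phi> q = ereal Q"
    using prox_minimizer_finite[OF assms(1)] assms(4,5) by (meson abs_neq_infinity_cases)
  have pq: "P + ((1 / \<gamma>) *\<^sub>R (w - p)) \<bullet> (q - p) - 0 / 2 * (norm (q - p))\<^sup>2 \<le> Q"
    using prox_minimizer_subgradient_ineq[OF assms(1-4), of q] by (simp add: P Q)
  have qp: "Q + ((1 / \<gamma>) *\<^sub>R (w - q)) \<bullet> (p - q) - 0 / 2 * (norm (p - q))\<^sup>2 \<le> P"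
    using prox_minimizer_subgradient_ineq[OF assms(1-3,5), of p] by (simp add: P Q)
  have "norm (p - q) \<le> 2 * norm (w - w)"
    by (rule norm_diff_le_of_subgradient_ineqs[OF \<open>\<gamma> > 0\<close> _ pq qp]) simp
  then show ?thesis by simp
qed

lemma prox_minimizer_prox:
  fixes \<phi> :: "'a::euclidean_space \<Rightarrow> ereal"
  assumes "proper_fun \<phi>" "lsc_fun \<phi>" "econvex_fun \<phi>" "\<gamma> > 0"
  shows "prox_minimizer \<gamma> \<phi> w (prox \<gamma> \<phi> w)"
proof -
  have "\<exists>!p. prox_minimizer \<gamma> \<phi> w p"
    using prox_minimizer_exists[OF assms] prox_minimizer_unique[OF assms(1,3,4)] by blast
  then show ?thesis unfolding prox_def prox_minimizer_def[abs_def] by (rule theI')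
qed

lemma prox_in_edom:
  fixes \<phi> :: "'a::euclidean_space \<Rightarrow> ereal"
  assumes "proper_fun \<phi>" "lsc_fun \<phi>" "econvex_fun \<phi>" "\<gamma> > 0"
  shows "prox \<gamma> \<phi> w \<in> edom \<phi>"
  using prox_minimizer_finite[OF assms(1) prox_minimizer_prox[OF assms], of w]
  by (cases "\<phi> (prox \<gamma> \<phi> w)") (auto simp: edom_def)

lemma prox_subgradient_ineq:
  fixes \<phi> :: "'a::euclidean_space \<Rightarrow> ereal"
  assumes "proper_fun \<phi>" "lsc_fun \<phi>" "econvex_fun \<phi>" "\<gamma> > 0"
  shows "\<phi> (prox \<gamma> \<phi> w) + ereal (((1 / \<gamma>) *\<^sub>R (w - prox \<gamma> \<phi> w)) \<bullet> (y - prox \<gamma> \<phi> w)) \<le> \<phi> y"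
  by (rule prox_minimizer_subgradient_ineq[OF assms(1,3,4) prox_minimizer_prox[OF assms]])

section \<open>Frechet stationarity\<close>

lemma frechet_subdiffI:
  fixes J :: "'a::real_inner \<Rightarrow> ereal"
  assumes fin: "\<bar>J x\<bar> \<noteq> \<infinity>"
    and lower: "\<And>y. J x + ereal (v \<bullet> (y - x) + r y) \<le> J y"
    and remainder: "((\<lambda>y. r y / norm (y - x)) \<longlongrightarrow> 0) (at x)"
  shows "v \<in> frechet_subdiff J x"
proof -
  obtain a where a: "J x = ereal a" using fin by auto
  have quotient: "ereal (r y / norm (y - x)) \<le> (J y - J x - ereal (v \<bullet> (y - x))) / ereal (norm (y - x))"
    if "y \<noteq> x" for y
  proof -
    have n: "norm (y - x) > 0" using that by simp
    show ?thesis
    proof (cases "J y")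
      case (real Y)
      then have "r y \<le> Y - a - v \<bullet> (y - x)" using lower[of y] by (simp add: a)
      then have "r y / norm (y - x) \<le> (Y - a - v \<bullet> (y - x)) / norm (y - x)"
        using n by (simp add: divide_right_mono)
      then show ?thesis using n by (simp add: a real ereal_divide)
    qed (use lower[of y] n in \<open>auto simp: a\<close>)
  qed
  have "0 \<le> Liminf (at x) (\<lambda>y. (J y - J x - ereal (v \<bullet> (y - x))) / ereal (norm (y - x)))"
    unfolding le_Liminf_iff
  proof (intro allI impI)
    fix c :: ereal assume "c < 0"
    have "((\<lambda>y. ereal (r y / norm (y - x))) \<longlongrightarrow> 0) (at x)"
      using tendsto_ereal[OF remainder] by (simp add: zero_ereal_def)
    then have "\<forall>\<^sub>F y in at x. c < ereal (r y / norm (y - x))"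
      using \<open>c < 0\<close> by (rule order_tendstoD)
    moreover have "\<forall>\<^sub>F y in at x. y \<noteq> x" by (rule eventually_neq_at_within)
    ultimately show "\<forall>\<^sub>F y in at x. c < (J y - J x - ereal (v \<bullet> (y - x))) / ereal (norm (y - x))"
      by eventually_elim (use quotient in \<open>blast intro: order_less_le_trans\<close>)
  qed
  then show ?thesis using fin unfolding frechet_subdiff_def by simp
qed

lemma tendsto_power2_norm_diff_div_norm:
  fixes S :: "'a::real_normed_vector \<Rightarrow> 'b::real_normed_vector"
  assumes deriv: "(S has_derivative S') (at x)"
  shows "((\<lambda>y. (norm (S y - S x))\<^sup>2 / norm (y - x)) \<longlongrightarrow> 0) (at x)"
proof -
  obtain K where "K > 0" and K: "\<And>u. norm (S' u) \<le> norm u * K"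
    using bounded_linear.pos_bounded[OF has_derivative_bounded_linear[OF deriv]] by blast
  have "((\<lambda>y. norm (S y - S x - S' (y - x)) / norm (y - x)) \<longlongrightarrow> 0) (at x)"
    using deriv unfolding has_derivative_iff_norm by blast
  then have "\<forall>\<^sub>F y in at x. norm (S y - S x - S' (y - x)) / norm (y - x) < 1"
    by (rule order_tendstoD) simp
  moreover have "\<forall>\<^sub>F y in at x. y \<noteq> x" by (rule eventually_neq_at_within)
  ultimately have "\<forall>\<^sub>F y in at x. norm ((norm (S y - S x))\<^sup>2 / norm (y - x)) \<le> (K + 1) * norm (S y - S x)"
  proof eventually_elim
    case (elim y)
    then have n: "norm (y - x) > 0" by simp
    have "norm (S y - S x) \<le> norm (S' (y - x)) + norm (S y - S x - S' (y - x))"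
      by (rule norm_triangle_sub)
    also have "\<dots> \<le> (K + 1) * norm (y - x)"
      using K[of "y - x"] elim(1) n by (simp add: divide_less_eq algebra_simps)
    finally have "(norm (S y - S x))\<^sup>2 \<le> (K + 1) * norm (y - x) * norm (S y - S x)"
      by (simp add: power2_eq_square mult_right_mono)
    then show ?case using n by (simp add: divide_le_eq algebra_simps)
  qed
  moreover have "((\<lambda>y. (K + 1) * norm (S y - S x)) \<longlongrightarrow> 0) (at x)"
    using has_derivative_continuous[OF deriv]
    by (intro tendsto_mult_right_zero) (simp add: continuous_at LIM_zero_iff tendsto_norm_zero_iff)
  ultimately show ?thesis by (rule Lim_null_comparison)
qed

lemma zero_in_frechet_subdiff_composite:
  fixes \<phi> :: "'x::real_inner \<Rightarrow> ereal" and h :: "'x \<Rightarrow> real"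
    and S :: "'x \<Rightarrow> 'z::real_inner" and g :: "'z \<Rightarrow> real"
  assumes h: "(h has_derivative (\<lambda>u. H \<bullet> u)) (at x)"
    and S: "(S has_derivative S') (at x)"
    and fin: "\<bar>\<phi> x\<bar> \<noteq> \<infinity>"
    and phi: "\<And>y. \<phi> x + ereal (- (H \<bullet> (y - x) + v \<bullet> S' (y - x))) \<le> \<phi> y"
    and g: "\<And>z. g (S x) + v \<bullet> (z - S x) - \<eta> / 2 * (norm (z - S x))\<^sup>2 \<le> g z"
  shows "0 \<in> frechet_subdiff (\<lambda>y. ereal (h y + g (S y)) + \<phi> y) x"
proof (rule frechet_subdiffI)
  define \<psi> where "\<psi> y = h y + v \<bullet> S y" for y
  define R where "R y = \<psi> y - \<psi> x - (H \<bullet> (y - x) + v \<bullet> S' (y - x))" for y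
  have "(\<psi> has_derivative (\<lambda>u. H \<bullet> u + v \<bullet> S' u)) (at x)"
    unfolding \<psi>_def using h S by (auto intro!: derivative_eq_intros)
  then have "((\<lambda>y. norm (R y) / norm (y - x)) \<longlongrightarrow> 0) (at x)"
    unfolding has_derivative_iff_norm R_def by blast
  then have "((\<lambda>y. norm (R y / norm (y - x))) \<longlongrightarrow> 0) (at x)" by (simp add: norm_divide)
  then have "((\<lambda>y. R y / norm (y - x)) \<longlongrightarrow> 0) (at x)" by (rule tendsto_norm_zero_cancel)
  moreover have "((\<lambda>y. \<eta> / 2 * ((norm (S y - S x))\<^sup>2 / norm (y - x))) \<longlongrightarrow> 0) (at x)"
    by (intro tendsto_mult_right_zero tendsto_power2_norm_diff_div_norm[OF S])
  ultimately have "((\<lambda>y. R y / norm (y - x) - \<eta> / 2 * ((norm (S y - S x))\<^sup>2 / norm (y - x))) \<longlongrightarrow> 0 - 0) (at x)"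
    by (rule tendsto_diff)
  then show "((\<lambda>y. (R y - \<eta> / 2 * (norm (S y - S x))\<^sup>2) / norm (y - x)) \<longlongrightarrow> 0) (at x)"
    by (simp add: diff_divide_distrib)
  obtain X where X: "\<phi> x = ereal X" using fin by auto
  then show "\<bar>ereal (h x + g (S x)) + \<phi> x\<bar> \<noteq> \<infinity>" by simp
  fix y
  show "ereal (h x + g (S x)) + \<phi> x + ereal (0 \<bullet> (y - x) + (R y - \<eta> / 2 * (norm (S y - S x))\<^sup>2))
      \<le> ereal (h y + g (S y)) + \<phi> y"
  proof (cases "\<phi> y")
    case (real Y)
    have "X - (H \<bullet> (y - x) + v \<bullet> S' (y - x)) \<le> Y" using phi[of y] by (simp add: X real)
    moreover have "g (S x) + v \<bullet> (S y - S x) - \<eta> / 2 * (norm (S y - S x))\<^sup>2 \<le> g (S y)" by (rule g)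
    ultimately show ?thesis by (simp add: X real R_def \<psi>_def inner_diff_right)
  next
    case MInf
    then show ?thesis using phi[of y] by (simp add: X)
  qed simp
qed

lemma weak_subgradient_ineq_limit:
  fixes g :: "'z::real_inner \<Rightarrow> real"
  assumes "continuous_on UNIV g" "z \<longlonglongrightarrow> z0" "v \<longlonglongrightarrow> v0"
    and ineq: "\<And>k. g (z k) + v k \<bullet> (y - z k) - \<eta> / 2 * (norm (y - z k))\<^sup>2 \<le> g y"
  shows "g z0 + v0 \<bullet> (y - z0) - \<eta> / 2 * (norm (y - z0))\<^sup>2 \<le> g y"
proof (rule LIMSEQ_le_const2)
  have "isCont g z0" using assms(1) by (simp add: continuous_on_eq_continuous_at)
  then have "(\<lambda>k. g (z k)) \<longlonglongrightarrow> g z0" using assms(2) by (rule isCont_tendsto_compose)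
  moreover have yz: "(\<lambda>k. y - z k) \<longlonglongrightarrow> y - z0" using assms(2) by (rule tendsto_diff[OF tendsto_const])
  moreover have "(\<lambda>k. v k \<bullet> (y - z k)) \<longlonglongrightarrow> v0 \<bullet> (y - z0)" by (rule tendsto_inner[OF assms(3) yz])
  moreover have "(\<lambda>k. \<eta> / 2 * (norm (y - z k))\<^sup>2) \<longlonglongrightarrow> \<eta> / 2 * (norm (y - z0))\<^sup>2"
    by (rule tendsto_mult_left[OF tendsto_power[OF tendsto_norm[OF yz]]])
  ultimately show "(\<lambda>k. g (z k) + v k \<bullet> (y - z k) - \<eta> / 2 * (norm (y - z k))\<^sup>2)
      \<longlonglongrightarrow> g z0 + v0 \<bullet> (y - z0) - \<eta> / 2 * (norm (y - z0))\<^sup>2"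
    by (intro tendsto_diff tendsto_add)
qed (use ineq in auto)

section \<open>Limits of proximal gradient steps\<close>

locale composite_problem =
  fixes \<phi> :: "'x::euclidean_space \<Rightarrow> ereal"
    and h :: "'x \<Rightarrow> real"
    and S :: "'x \<Rightarrow> 'z::euclidean_space"
    and DS :: "'x \<Rightarrow> ('x \<Rightarrow>\<^sub>L 'z)"
    and g :: "'z \<Rightarrow> real"
    and L\<^sub>h Lg \<eta> :: real
  assumes phi_proper: "proper_fun \<phi>"
    and phi_lsc: "lsc_fun \<phi>"
    and phi_convex: "econvex_fun \<phi>"
    and h_diff: "\<And>y. h differentiable (at y)"
    and h_grad_lip: "lipschitz_on L\<^sub>h (edom \<phi>) (gradient h)"
    and S_deriv: "\<And>y. (S has_derivative blinfun_apply (DS y)) (at y)"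
    and S_C1: "continuous_on UNIV DS"
    and Lg_nonneg: "Lg \<ge> 0"
    and g_lip: "lipschitz_on Lg UNIV g"
    and g_weakly_convex: "convex_on UNIV (\<lambda>z. g z + \<eta> / 2 * (norm z)\<^sup>2)"
begin

abbreviation smoothed :: "real \<Rightarrow> 'x \<Rightarrow> real" where
  "smoothed \<mu> \<equiv> \<lambda>y. h y + moreau_env \<mu> g (S y)"

lemma prox_grad_step_ineq:
  fixes x y :: 'x
  assumes "\<gamma> > 0" "\<mu> > 0" "\<mu> * \<eta> \<le> 1 / 2"
  defines "p \<equiv> prox \<gamma> \<phi> (x - \<gamma> *\<^sub>R gradient (smoothed \<mu>) x)"
  shows "\<phi> p + ereal (((1 / \<gamma>) *\<^sub>R (x - p) - gradient h x) \<bullet> (y - p)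
      - moreau_grad \<mu> g (S x) \<bullet> DS x (y - p)) \<le> \<phi> y"
proof -
  have "(1 / \<gamma>) *\<^sub>R ((x - \<gamma> *\<^sub>R gradient (smoothed \<mu>) x) - p) = (1 / \<gamma>) *\<^sub>R (x - p) - gradient (smoothed \<mu>) x"
    using \<open>\<gamma> > 0\<close> by (simp add: algebra_simps)
  moreover have "gradient (smoothed \<mu>) x \<bullet> (y - p) = gradient h x \<bullet> (y - p) + moreau_grad \<mu> g (S x) \<bullet> DS x (y - p)"
    by (rule gradient_add_moreau_env_comp[OF g_lip Lg_nonneg assms(2,3) g_weakly_convex h_diff S_deriv])
  ultimately show ?thesis
    using prox_subgradient_ineq[OF phi_proper phi_lsc phi_convex \<open>\<gamma> > 0\<close>, of "x - \<gamma> *\<^sub>R gradient (smoothed \<mu>) x" y]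
    by (simp add: p_def[symmetric] inner_diff_left diff_diff_eq)
qed

lemma zero_in_frechet_subdiff_of_prox_grad_limit:
  fixes x :: "nat \<Rightarrow> 'x" and \<mu> :: "nat \<Rightarrow> real"
  assumes x: "x \<longlonglongrightarrow> xs" "\<And>k. x k \<in> edom \<phi>"
    and \<mu>: "\<And>k. \<mu> k > 0" "\<And>k. \<mu> k * \<eta> \<le> 1 / 2" "\<mu> \<longlonglongrightarrow> 0"
    and "\<gamma> > 0"
    and residual: "(\<lambda>k. residual \<gamma> (smoothed (\<mu> k)) \<phi> (x k)) \<longlonglongrightarrow> 0"
    and v: "(\<lambda>k. moreau_grad (\<mu> k) g (S (x k))) \<longlonglongrightarrow> v"
  shows "0 \<in> frechet_subdiff (\<lambda>y. ereal (h y + g (S y)) + \<phi> y) xs"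
proof -
  define p where "p k = prox \<gamma> \<phi> (x k - \<gamma> *\<^sub>R gradient (smoothed (\<mu> k)) (x k))" for k
  define r where "r k = (1 / \<gamma>) *\<^sub>R (x k - p k)" for k
  have "(\<lambda>k. norm (r k)) \<longlonglongrightarrow> 0" using residual by (simp add: residual_def r_def p_def)
  then have r: "r \<longlonglongrightarrow> 0" by (simp add: tendsto_norm_zero_iff)
  have "\<gamma> *\<^sub>R r k = x k - p k" for k using \<open>\<gamma> > 0\<close> by (simp add: r_def)
  then have "p = (\<lambda>k. x k - \<gamma> *\<^sub>R r k)" by simp
  then have p: "p \<longlonglongrightarrow> xs"
    using tendsto_diff[OF x(1) tendsto_scaleR[OF tendsto_const r]] by simp
  txt \<open>\<open>xs \<in> edom \<phi>\<close> is only known once \<open>phi_ineq\<close> is proved, so the limit of the gradients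
    of \<open>h\<close> comes first from their uniform continuity on \<open>edom \<phi>\<close> and is identified afterwards.\<close>
  have "Cauchy (\<lambda>k. gradient h (x k))"
    by (rule uniformly_continuous_on_Cauchy[OF lipschitz_on_uniformly_continuous[OF h_grad_lip]
          LIMSEQ_imp_Cauchy[OF x(1)] x(2)])
  then obtain H where H: "(\<lambda>k. gradient h (x k)) \<longlonglongrightarrow> H"
    unfolding Cauchy_convergent_iff convergent_def by blast
  have "isCont DS xs" using S_C1 by (simp add: continuous_on_eq_continuous_at)
  then have DS: "(\<lambda>k. DS (x k)) \<longlonglongrightarrow> DS xs" using x(1) by (rule isCont_tendsto_compose)
  have phi_ineq: "\<phi> xs + ereal (- (H \<bullet> (y - xs) + v \<bullet> DS xs (y - xs))) \<le> \<phi> y" for y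
  proof (rule lsc_fun_subgradient_ineq_limit[OF phi_lsc p])
    have "(\<lambda>k. y - p k) \<longlonglongrightarrow> y - xs" by (rule tendsto_diff[OF tendsto_const p])
    moreover note bounded_bilinear.tendsto[OF bounded_bilinear_blinfun_apply DS this]
    ultimately show "(\<lambda>k. (r k - gradient h (x k)) \<bullet> (y - p k) - moreau_grad (\<mu> k) g (S (x k)) \<bullet> DS (x k) (y - p k))
        \<longlonglongrightarrow> - (H \<bullet> (y - xs) + v \<bullet> DS xs (y - xs))"
      using p DS r H v by (auto intro!: tendsto_eq_intros)
    show "\<phi> (p k) + ereal ((r k - gradient h (x k)) \<bullet> (y - p k)
        - moreau_grad (\<mu> k) g (S (x k)) \<bullet> DS (x k) (y - p k)) \<le> \<phi> y" for k
      unfolding p_def r_def by (rule prox_grad_step_ineq[OF \<open>\<gamma> > 0\<close> \<mu>(1,2)])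
  qed
  have fin: "\<bar>\<phi> xs\<bar> \<noteq> \<infinity>"
    using phi_ineq[of "x 0"] x(2)[of 0] phi_proper by (auto simp: edom_def proper_fun_def)
  have "(\<lambda>k. gradient h (x k)) \<longlonglongrightarrow> gradient h xs"
    using fin x by (intro continuous_on_tendsto_compose[OF lipschitz_on_continuous_on[OF h_grad_lip]])
      (auto simp: edom_def)
  then have H_eq: "H = gradient h xs" using H by (rule LIMSEQ_unique[rotated])
  have "(\<lambda>k. S (x k)) \<longlonglongrightarrow> S xs"
    by (rule isCont_tendsto_compose[OF has_derivative_continuous[OF S_deriv] x(1)])
  then have g_ineq: "g (S xs) + v \<bullet> (z - S xs) - \<eta> / 2 * (norm (z - S xs))\<^sup>2 \<le> g z" for z
    by (rule weak_subgradient_ineq_limit[OF lipschitz_on_continuous_on[OF g_lip]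
          tendsto_moreau_prox[OF g_lip Lg_nonneg \<mu>(1,3)] v
          moreau_prox_weak_subgradient[OF g_lip Lg_nonneg \<mu>(1) g_weakly_convex]])
  show ?thesis
    by (rule zero_in_frechet_subdiff_composite[OF has_derivative_gradient[OF h_diff] S_deriv fin
          phi_ineq[unfolded H_eq] g_ineq])
qed

lemma zero_in_frechet_subdiff_of_vanishing_residual:
  fixes x :: "nat \<Rightarrow> 'x" and \<mu> :: "nat \<Rightarrow> real"
  assumes x: "x \<longlonglongrightarrow> xs" "\<And>k. x k \<in> edom \<phi>"
    and \<mu>: "\<And>k. \<mu> k > 0" "\<And>k. \<mu> k * \<eta> \<le> 1 / 2" "\<mu> \<longlonglongrightarrow> 0"
    and "\<gamma> > 0"
    and residual: "(\<lambda>k. residual \<gamma> (smoothed (\<mu> k)) \<phi> (x k)) \<longlonglongrightarrow> 0"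
  shows "0 \<in> frechet_subdiff (\<lambda>y. ereal (h y + g (S y)) + \<phi> y) xs"
proof -
  have "bounded (range (\<lambda>k. moreau_grad (\<mu> k) g (S (x k))))"
    unfolding bounded_iff using norm_moreau_grad_le[OF g_lip Lg_nonneg \<mu>(1)] by blast
  then obtain v s where s: "strict_mono s" and v: "((\<lambda>k. moreau_grad (\<mu> k) g (S (x k))) \<circ> s) \<longlonglongrightarrow> v"
    using bounded_imp_convergent_subsequence by blast
  show ?thesis
  proof (rule zero_in_frechet_subdiff_of_prox_grad_limit[of "x \<circ> s" xs "\<mu> \<circ> s" \<gamma> v])
    show "(x \<circ> s) \<longlonglongrightarrow> xs" "(\<mu> \<circ> s) \<longlonglongrightarrow> 0"
      using LIMSEQ_subseq_LIMSEQ[OF _ s] x(1) \<mu>(3) by blast+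
    show "(\<lambda>k. residual \<gamma> (smoothed ((\<mu> \<circ> s) k)) \<phi> ((x \<circ> s) k)) \<longlonglongrightarrow> 0"
      using LIMSEQ_subseq_LIMSEQ[OF residual s] by (simp add: o_def)
    show "(\<lambda>k. moreau_grad ((\<mu> \<circ> s) k) g (S ((x \<circ> s) k))) \<longlonglongrightarrow> v"
      using v by (simp add: o_def)
  qed (use x(2) \<mu>(1,2) \<open>\<gamma> > 0\<close> in simp_all)
qed

end

theorem theorem2:
  fixes \<phi> :: "'x::euclidean_space \<Rightarrow> ereal"
    and h :: "'x \<Rightarrow> real"
    and S :: "'x \<Rightarrow> 'z::euclidean_space"
    and DS :: "'x \<Rightarrow> ('x \<Rightarrow>\<^sub>L 'z)"
    and g :: "'z \<Rightarrow> real"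
    and Lg \<eta> L\<^sub>h c M w\<^sub>1 w\<^sub>2 \<beta> \<gamma>bar :: real
    and \<mu> \<gamma> :: "nat \<Rightarrow> real"
    and x :: "nat \<Rightarrow> 'x"
    and m :: "nat \<Rightarrow> nat"
    and xstar :: 'x
  defines "F \<equiv> (\<lambda>y. h y + g (S y))"
    and "Fn \<equiv> (\<lambda>n y. h y + moreau_env (\<mu> n) g (S y))"
  assumes phi_proper: "proper_fun \<phi>"
    and phi_lsc: "lsc_fun \<phi>"
    and phi_convex: "econvex_fun \<phi>"
    and h_diff: "\<And>y. h differentiable (at y)"
    and h_grad_lip: "lipschitz_on L\<^sub>h (edom \<phi>) (gradient h)"
    and S_deriv: "\<And>y. (S has_derivative blinfun_apply (DS y)) (at y)"
    and S_C1: "continuous_on UNIV DS"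
    and Lg_pos: "Lg > 0"
    and g_lip: "lipschitz_on Lg UNIV g"
    and eta_pos: "\<eta> > 0"
    and g_weakly_convex: "convex_on UNIV (\<lambda>z. g z + \<eta> / 2 * (norm z)\<^sup>2)"
    and argmin_nonempty: "\<exists>y. \<forall>w. ereal (F y) + \<phi> y \<le> ereal (F w) + \<phi> w"
    and x0_dom: "x 0 \<in> edom \<phi>"
    and c_bounds: "0 < c" "c < 1"
    and mu_bounds: "\<And>n. 0 < \<mu> n \<and> \<mu> n \<le> 1 / (2 * \<eta>)"
    and mu_lim: "\<mu> \<longlonglongrightarrow> 0"
    and mu_not_summable: "\<not> summable \<mu>"
    and M_ge: "M \<ge> 1"
    and mu_ratio: "\<And>n. 1 / M \<le> \<mu> (Suc n) / \<mu> n \<and> \<mu> (Suc n) / \<mu> n \<le> 1"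
    and varpi: "w\<^sub>1 \<ge> 0" "w\<^sub>2 > 0"
    and Fn_grad_lip: "\<And>n. lipschitz_on (w\<^sub>1 + w\<^sub>2 / \<mu> n) (edom \<phi>) (gradient (Fn n))"
    and beta_pos: "\<beta> > 0" and gammabar_pos: "\<gamma>bar > 0"
    and gamma_bounds: "\<And>n. \<beta> / (w\<^sub>1 + w\<^sub>2 / \<mu> n) \<le> \<gamma> n \<and> \<gamma> n \<le> \<gamma>bar"
    and gamma_pos: "\<And>n. \<gamma> n > 0"
    and sufficient_decrease: "\<And>n.
        ereal (Fn n (prox (\<gamma> n) \<phi> (x n - \<gamma> n *\<^sub>R gradient (Fn n) (x n))))
          + \<phi> (prox (\<gamma> n) \<phi> (x n - \<gamma> n *\<^sub>R gradient (Fn n) (x n)))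
        \<le> ereal (Fn n (x n)) + \<phi> (x n)
          - ereal (c * \<gamma> n * (residual (\<gamma> n) (Fn n) \<phi> (x n))\<^sup>2)"
    and iteration: "\<And>n. x (Suc n) = prox (\<gamma> n) \<phi> (x n - \<gamma> n *\<^sub>R gradient (Fn n) (x n))"
    and m_mono: "strict_mono m"
    and residual_lim: "(\<lambda>l. residual \<gamma>bar (Fn (m l)) \<phi> (x (m l))) \<longlonglongrightarrow> 0"
    and cluster: "cluster_point (\<lambda>l. x (m l)) xstar"
  shows "0 \<in> frechet_subdiff (\<lambda>y. ereal (F y) + \<phi> y) xstar"
proof -
  have mu_eta: "\<mu> n * \<eta> \<le> 1 / 2" for n
    using mu_bounds[of n] eta_pos by (simp add: field_simps)
  interpret composite_problem \<phi> h S DS g L\<^sub>h Lg \<eta>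
    using phi_proper phi_lsc phi_convex h_diff h_grad_lip S_deriv S_C1 Lg_pos g_lip g_weakly_convex
    by unfold_locales auto
  have dom: "x n \<in> edom \<phi>" for n
    using x0_dom prox_in_edom[OF phi_proper phi_lsc phi_convex gamma_pos] by (cases n) (simp_all add: iteration)
  obtain r where r: "strict_mono r" "((\<lambda>l. x (m l)) \<circ> r) \<longlonglongrightarrow> xstar"
    using cluster unfolding cluster_point_def by blast
  have "0 \<in> frechet_subdiff (\<lambda>y. ereal (h y + g (S y)) + \<phi> y) xstar"
  proof (rule zero_in_frechet_subdiff_of_vanishing_residual[of "\<lambda>l. x (m (r l))" xstar "\<lambda>l. \<mu> (m (r l))" \<gamma>bar])
    show "(\<lambda>l. \<mu> (m (r l))) \<longlonglongrightarrow> 0"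
      using LIMSEQ_subseq_LIMSEQ[OF mu_lim strict_mono_o[OF m_mono r(1)]] by (simp add: o_def)
    show "(\<lambda>l. residual \<gamma>bar (smoothed (\<mu> (m (r l)))) \<phi> (x (m (r l)))) \<longlonglongrightarrow> 0"
      using LIMSEQ_subseq_LIMSEQ[OF residual_lim r(1)] by (simp add: o_def Fn_def)
  qed (use r(2) dom mu_bounds mu_eta gammabar_pos in \<open>simp_all add: o_def\<close>)
  then show ?thesis by (simp add: F_def)
qed

end
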